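(* Assume $d=1$. Let $x_0\in\mathcal{M}_0$ with $\lambda_0(x_0)<\Delta\wedge\frac{\sin(\Theta)^2}{4\rho}$. Then there exists $x_0^*\in\mathcal{M}_0$ with $\lambda_0(x_0^* )=0$ and $d_{\mathcal{M}_0}(x_0,x_0^* )\le\frac{2}{\sin(\Theta)}\lambda_0(x_0)$.
   Context: $E=\mathbb{R}^n$. $\mathcal{M}_0$ is a compact $1$-dimensional $\mathcal{C}^2$ manifold and $u:\mathcal{M}_0\to E$ an immersion; $\mathcal{M}_0$ carries the induced metric, with geodesic distance $d_{\mathcal{M}_0}$. For $x_0\in\mathcal{M}_0$, $x=u(x_0)$ and $T_x\mathcal{M}=d_{x_0}u(T_{x_0}\mathcal{M}_0)$. Assumptions: (i) whenever $x_0\ne y_0$ and $x=y$, $T_x\mathcal{M}\ne T_y\mathcal{M}$; (ii) the second fundamental form has operator norm at most $\rho>0$ everywhere; (iii) there is a probability measure $\mu_0$ on $\mathcal{M}_0$ with density $f_0$ w.r.t. the $1$-dimensional Hausdorff measure, $f_0$ Lipschitz for $d_{\mathcal{M}_0}$ and bounded between $f_{\min},f_{\max}>0$. Normal reach: $\lambda_0(x_0)=\inf\{\|x-y\|:\ y_0\ne x_0,\ x-y\perp T_y\mathcal{M}\}$. Let $\mathcal{D}_0=\{(x_0,y_0):x_0\ne y_0,\ x-y\perp T_y\mathcal{M},\ x-y\perp T_x\mathcal{M}\}$ and $\mathcal{C}_0=\{(x_0,y_0):x_0\ne y_0,\ x=y\}$. For $(x_0,y_0)\in\mathcal{C}_0$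 let $\theta(x_0,y_0)\in[0,\pi/2]$ be the angle between the lines $T_x\mathcal{M}$ and $T_y\mathcal{M}$; $\Theta=\inf\{\theta(x_0,y_0):(x_0,y_0)\in\mathcal{C}_0\}$ and $\Delta=\inf\{\|x-y\|:(x_0,y_0)\in\mathcal{D}_0\setminus\mathcal{C}_0\}$. *)

theory Defs
  imports "HOL-Analysis.Analysis"
begin

text \<open>A compact 1-dimensional C2 manifold M0 is modelled as a finite disjoint union of
circles R/(L i)Z, i in I; a point of M0 is a pair (i,s) with 0 <= s < L i.
The immersion u is given on component i by an L i-periodic map gamma i, parametrised
by arc length of the induced metric (unit speed), with derivatives gamma' and gamma''.\<close>

definition pts :: "'i set \<Rightarrow> ('i \<Rightarrow> real) \<Rightarrow> ('i \<times> real) set" where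
  "pts I L = {(i,s). i \<in> I \<and> 0 \<le> s \<and> s < L i}"

definition gdist :: "('i \<Rightarrow> real) \<Rightarrow> 'i \<times> real \<Rightarrow> 'i \<times> real \<Rightarrow> ereal" where
  "gdist L p q = (if fst p = fst q
     then ereal (Inf {\<bar>snd p - snd q + real_of_int k * L (fst p)\<bar> | k. True})
     else \<infinity>)"

definition curve_system ::
  "'i set \<Rightarrow> ('i \<Rightarrow> real) \<Rightarrow> ('i \<Rightarrow> real \<Rightarrow> 'a::euclidean_space)
   \<Rightarrow> ('i \<Rightarrow> real \<Rightarrow> 'a) \<Rightarrow> ('i \<Rightarrow> real \<Rightarrow> 'a) \<Rightarrow> bool" where
  "curve_system I L \<gamma> \<gamma>' \<gamma>'' \<longleftrightarrow> finite I \<and>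
     (\<forall>i\<in>I. L i > 0 \<and> (\<forall>t. \<gamma> i (t + L i) = \<gamma> i t)
        \<and> (\<forall>t. (\<gamma> i has_vector_derivative \<gamma>' i t) (at t))
        \<and> (\<forall>t. (\<gamma>' i has_vector_derivative \<gamma>'' i t) (at t))
        \<and> continuous_on UNIV (\<gamma>'' i)
        \<and> (\<forall>t. norm (\<gamma>' i t) = 1))"

definition tline :: "('i \<Rightarrow> real \<Rightarrow> 'a::euclidean_space) \<Rightarrow> 'i \<times> real \<Rightarrow> 'a set" where
  "tline \<gamma>' p = span {\<gamma>' (fst p) (snd p)}"

definition upt :: "('i \<Rightarrow> real \<Rightarrow> 'a) \<Rightarrow> 'i \<times> real \<Rightarrow> 'a" where
  "upt \<gamma> p = \<gamma> (fst p) (snd p)"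

text \<open>Second fundamental form at (i,s) (unit speed): II(v,w) = v w N, N the normal
part of gamma''; its operator norm is norm N.\<close>
definition sff_norm :: "('i \<Rightarrow> real \<Rightarrow> 'a::euclidean_space) \<Rightarrow> ('i \<Rightarrow> real \<Rightarrow> 'a) \<Rightarrow> 'i \<times> real \<Rightarrow> real" where
  "sff_norm \<gamma>' \<gamma>'' p = norm (upt \<gamma>'' p - (upt \<gamma>'' p \<bullet> upt \<gamma>' p) *\<^sub>R upt \<gamma>' p)"

definition normal_reach ::
  "'i set \<Rightarrow> ('i \<Rightarrow> real) \<Rightarrow> ('i \<Rightarrow> real \<Rightarrow> 'a::euclidean_space) \<Rightarrow> ('i \<Rightarrow> real \<Rightarrow> 'a)
   \<Rightarrow> 'i \<times> real \<Rightarrow> real" where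
  "normal_reach I L \<gamma> \<gamma>' p = Inf {norm (upt \<gamma> p - upt \<gamma> q) | q.
      q \<in> pts I L \<and> q \<noteq> p \<and> (\<forall>v\<in>tline \<gamma>' q. (upt \<gamma> p - upt \<gamma> q) \<bullet> v = 0)}"

definition D0set where
  "D0set I L \<gamma> \<gamma>' = {(p,q). p \<in> pts I L \<and> q \<in> pts I L \<and> p \<noteq> q
      \<and> (\<forall>v\<in>tline \<gamma>' q. (upt \<gamma> p - upt \<gamma> q) \<bullet> v = 0)
      \<and> (\<forall>v\<in>tline \<gamma>' p. (upt \<gamma> p - upt \<gamma> q) \<bullet> v = 0)}"

definition C0set where
  "C0set I L \<gamma> = {(p,q). p \<in> pts I L \<and> q \<in> pts I L \<and> p \<noteq> q \<and> upt \<gamma> p = upt \<gamma> q}"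

definition line_angle where
  "line_angle \<gamma>' p q = arccos \<bar>upt \<gamma>' p \<bullet> upt \<gamma>' q\<bar>"

definition Theta where
  "Theta I L \<gamma> \<gamma>' = Inf (insert (pi/2) ((\<lambda>(p,q). line_angle \<gamma>' p q) ` C0set I L \<gamma>))"

text \<open>Delta as an extended real (Delta = infinity if D0 - C0 is empty).\<close>
definition Delta :: "_ \<Rightarrow> _ \<Rightarrow> _ \<Rightarrow> _ \<Rightarrow> ereal" where
  "Delta I L \<gamma> \<gamma>' = Inf ((\<lambda>(p,q). ereal (norm (upt \<gamma> p - upt \<gamma> q))) ` (D0set I L \<gamma> \<gamma>' - C0set I L \<gamma>))"

end

theory Submission
  imports Defs "HOL-Library.Real_Mod"
begin

text \<open>Let \<open>x\<^sub>0 = (i, a)\<close> have positive normal reach \<open>r\<^sub>0\<close> and take a foot \<open>(j, b)\<close> of a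
  normal through \<open>u(x\<^sub>0)\<close> whose length \<open>r\<close> is only slightly larger than \<open>r\<^sub>0\<close>.  In the parameter
  plane, let \<open>C\<close> be the connected component of \<open>(a, b)\<close> in the region where the chord
  \<open>|\<gamma>\<^sub>i s - \<gamma>\<^sub>j t|\<close> stays below a level \<open>R < \<Delta>\<close> (for \<open>i = j\<close> a band around the diagonal
  is removed).  By periodicity the chord length attains its minimum over \<open>C\<close> at an interior
  point, which is a critical chord; critical chords shorter than \<open>\<Delta>\<close> are degenerate, so the
  minimum is a self-crossing \<open>(s, t)\<close> of the immersion.  Near a crossing at angle at least
  \<open>\<Theta>\<close>, second-order Taylor expansion gives \<open>|\<gamma>\<^sub>i u - \<gamma>\<^sub>j v| \<ge> sin \<Theta> M - \<rho> M\<^sup>2\<close> with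
  \<open>M = max |u - s| |v - t|\<close>; this bound reaches \<open>sin \<Theta>\<^sup>2 / (4 \<rho>) > R\<close> at
  \<open>M = sin \<Theta> / (2 \<rho>)\<close>, so by connectedness \<open>M\<close> stays below that vertex on \<open>C\<close>.  At \<open>(a, b)\<close>
  this yields \<open>|a - s| < 2 r\<^sub>0 / sin \<Theta>\<close>, and \<open>(i, s)\<close> has normal reach \<open>0\<close>.\<close>

section \<open>Periodic functions\<close>

lemma periodic_add_of_int_mult:
  assumes periodic: "\<And>t. f (t + L) = f t"
  shows "f (t + of_int k * L) = f t"
proof -
  have nat_mult: "f (t + of_nat n * L) = f t" for n t
  proof (induction n)
    case (Suc n)
    have "f (t + of_nat (Suc n) * L) = f ((t + of_nat n * L) + L)"
      by (simp add: algebra_simps)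
    with Suc show ?case by (simp only: periodic)
  qed simp
  show ?thesis
  proof (cases "k \<ge> 0")
    case True
    then show ?thesis using nat_mult[of t "nat k"] by simp
  next
    case False
    then show ?thesis using nat_mult[of "t + of_int k * L" "nat (- k)"] by simp
  qed
qed

lemma periodic_rmod:
  assumes "\<And>t. f (t + L) = f t" and "0 < L"
  shows "f (t rmod L) = f t"
  using periodic_add_of_int_mult[of f L t "- \<lfloor>t / L\<rfloor>"] assms by (simp add: rmod_def mult.commute)

lemma periodic_has_vector_derivative:
  fixes f :: "real \<Rightarrow> 'a::real_normed_vector"
  assumes periodic: "\<And>t. f (t + L) = f t"
    and deriv: "\<And>t. (f has_vector_derivative f' t) (at t)"
  shows "f' (t + L) = f' t"
proof -
  have "((\<lambda>x. x + L) has_vector_derivative 1) (at t)"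
    by (auto intro!: derivative_eq_intros)
  from vector_diff_chain_at[OF this deriv]
  have "((f \<circ> (\<lambda>x. x + L)) has_vector_derivative f' (t + L)) (at t)"
    by simp
  moreover have "f \<circ> (\<lambda>x. x + L) = f"
    using periodic by (auto simp: o_def)
  ultimately show ?thesis
    using deriv vector_derivative_unique_at by metis
qed

lemma has_real_derivative_norm_diff_power2:
  fixes X :: "real \<Rightarrow> 'a::real_inner"
  assumes "(X has_vector_derivative X') (at s)"
  shows "((\<lambda>s. (norm (X s - p))\<^sup>2) has_real_derivative 2 * ((X s - p) \<bullet> X')) (at s)"
  using assms unfolding power2_norm_eq_inner has_field_derivative_def has_vector_derivative_def
  by (auto intro!: derivative_eq_intros simp: inner_commute algebra_simps fun_eq_iff)

lemma rmod_eq_rmod_imp_int_mult: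
  assumes "s rmod L = t rmod L"
  obtains k :: int where "s - t = of_int k * L"
  using assms rcong_altdef[of t s L] unfolding rcong_def by (auto simp: algebra_simps)

section \<open>Closed unit-speed curves of bounded curvature\<close>

locale unit_speed_loop =
  fixes c c' c'' :: "real \<Rightarrow> 'a::euclidean_space" and L :: real
  assumes period_pos: "0 < L"
    and periodic: "c (t + L) = c t"
    and has_velocity: "(c has_vector_derivative c' t) (at t)"
    and has_acceleration: "(c' has_vector_derivative c'' t) (at t)"
    and unit_speed: "norm (c' t) = 1"
begin

lemma velocity_periodic: "c' (t + L) = c' t"
  using periodic has_velocity by (rule periodic_has_vector_derivative)

lemma acceleration_periodic: "c'' (t + L) = c'' t"
  using velocity_periodic has_acceleration by (rule periodic_has_vector_derivative)

lemma periodic_of_int: "c (t + of_int k * L) = c t"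
  using periodic by (rule periodic_add_of_int_mult)

lemma rmod_eqs:
  "c (t rmod L) = c t" "c' (t rmod L) = c' t" "c'' (t rmod L) = c'' t"
  using periodic velocity_periodic acceleration_periodic period_pos by (auto intro: periodic_rmod)

lemma continuous: "continuous_on UNIV c"
  using has_velocity
  by (metis continuous_at_imp_continuous_on has_vector_derivative_continuous)

lemma velocity_inner_self: "c' t \<bullet> c' t = 1"
  using unit_speed by (simp add: dot_square_norm)

lemma acceleration_orthogonal: "c'' t \<bullet> c' t = 0"
proof -
  have "((\<lambda>t. c' t \<bullet> c' t) has_real_derivative 2 * (c'' t \<bullet> c' t)) (at t)"
    using has_acceleration[of t] unfolding has_field_derivative_def has_vector_derivative_def
    by (auto intro!: derivative_eq_intros simp: inner_commute algebra_simps fun_eq_iff)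
  moreover have "((\<lambda>t. c' t \<bullet> c' t) has_real_derivative 0) (at t)"
    by (simp add: velocity_inner_self)
  ultimately show ?thesis
    using DERIV_unique by fastforce
qed

end

locale bounded_curvature_loop = unit_speed_loop +
  fixes \<rho> :: real
  assumes curvature_pos: "0 < \<rho>"
    and curvature_bound: "norm (c'' t) \<le> \<rho>"
begin

lemma taylor_remainder_bound: "norm (c (s + h) - c s - h *\<^sub>R c' s) \<le> \<rho> * h\<^sup>2 / 2"
proof (cases "h = 0")
  case False
  define R where "R = c (s + h) - c s - h *\<^sub>R c' s"
  \<comment> \<open>Taylor's theorem for the scalar function \<open>t \<mapsto> c t \<bullet> R\<close>, with \<open>R\<close> the remainder itself\<close>
  define d where "d m = (if m = 0 then (\<lambda>t. c t \<bullet> R) else if m = 1 then (\<lambda>t. c' t \<bullet> R)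
                         else (\<lambda>t. c'' t \<bullet> R))" for m :: nat
  have "\<forall>m t. m < 2 \<and> min s (s + h) \<le> t \<and> t \<le> max s (s + h) \<longrightarrow> DERIV (d m) t :> d (Suc m) t"
    using has_velocity has_acceleration unfolding has_real_derivative_iff_has_vector_derivative
    by (auto simp: d_def less_2_cases_iff
             intro!: bounded_linear.has_vector_derivative[OF bounded_linear_inner_left])
  then obtain t
    where "d 0 (s + h) = (\<Sum>m<2. d m s / fact m * (s + h - s) ^ m) + d 2 t / fact 2 * (s + h - s) ^ 2"
    using Taylor[of 2 d "d 0" "min s (s + h)" "max s (s + h)" s "s + h"] False by auto
  then have "R \<bullet> R = (c'' t \<bullet> R) / 2 * h\<^sup>2"
    by (simp add: d_def numeral_2_eq_2 R_def inner_diff_left algebra_simps)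
  also have "\<dots> \<le> norm (c'' t) * norm R / 2 * h\<^sup>2"
    by (intro mult_right_mono divide_right_mono) (simp_all add: norm_cauchy_schwarz)
  also have "\<dots> \<le> \<rho> * norm R / 2 * h\<^sup>2"
    by (intro mult_right_mono divide_right_mono curvature_bound) simp_all
  finally have "norm R * norm R \<le> (\<rho> * h\<^sup>2 / 2) * norm R"
    by (simp add: dot_square_norm power2_eq_square mult_ac)
  then show ?thesis
    using curvature_pos by (cases "norm R = 0") (auto simp: R_def)
qed simp

lemma tangential_chord_lower_bound: "\<bar>h\<bar> - \<rho> * h\<^sup>2 / 2 \<le> \<bar>(c (s + h) - c s) \<bullet> c' s\<bar>"
proof -
  have "\<bar>(c (s + h) - c s - h *\<^sub>R c' s) \<bullet> c' s\<bar> \<le> \<rho> * h\<^sup>2 / 2"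
    using Cauchy_Schwarz_ineq2[of _ "c' s"] taylor_remainder_bound[of s h] unit_speed[of s]
    by (metis mult.right_neutral order_trans)
  then have "\<bar>(c (s + h) - c s) \<bullet> c' s - h\<bar> \<le> \<rho> * h\<^sup>2 / 2"
    by (simp add: inner_diff_left velocity_inner_self)
  then show ?thesis
    by arith
qed

lemma chord_norm_lower_bound:
  assumes "1 / (2 * \<rho>) \<le> \<bar>h\<bar>" "\<bar>h\<bar> \<le> 1 / \<rho>"
  shows "3 / (8 * \<rho>) \<le> norm (c (s + h) - c s)"
proof -
  have "0 \<le> (2 * \<rho> * \<bar>h\<bar> - 1) * (3 - 2 * \<rho> * \<bar>h\<bar>)"
    using assms curvature_pos by (intro mult_nonneg_nonneg) (simp_all add: field_simps)
  then have "3 / (8 * \<rho>) \<le> \<bar>h\<bar> - \<rho> * h\<^sup>2 / 2"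
    using curvature_pos by (simp add: field_simps power2_eq_square)
  also have "\<dots> \<le> \<bar>(c (s + h) - c s) \<bullet> c' s\<bar>"
    by (rule tangential_chord_lower_bound)
  also have "\<dots> \<le> norm (c (s + h) - c s)"
    using Cauchy_Schwarz_ineq2[of "c (s + h) - c s" "c' s"] by (simp add: unit_speed)
  finally show ?thesis .
qed

lemma no_short_normal_chord:
  assumes "h \<noteq> 0" "\<bar>h\<bar> < 2 / \<rho>"
  shows "(c (s + h) - c s) \<bullet> c' s \<noteq> 0"
proof -
  have "0 < \<bar>h\<bar> * (2 - \<rho> * \<bar>h\<bar>)"
    using assms curvature_pos by (intro mult_pos_pos) (simp_all add: field_simps)
  then have "0 < \<bar>h\<bar> - \<rho> * h\<^sup>2 / 2"
    by (simp add: power2_eq_square algebra_simps)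
  then show ?thesis
    using tangential_chord_lower_bound[of h s] by auto
qed

text \<open>The point of the loop farthest from \<open>c a\<close> is a foot of a normal through \<open>c a\<close>.\<close>

lemma exists_normal_chord: "\<exists>t. (c a - c t) \<bullet> c' t = 0 \<and> c t \<noteq> c a"
proof -
  define \<phi> where "\<phi> t = (norm (c t - c a))\<^sup>2" for t
  have "continuous_on {0..L} \<phi>"
    unfolding \<phi>_def by (intro continuous_intros continuous_on_subset[OF continuous]) auto
  then obtain t where "t \<in> {0..L}" and max_box: "\<And>y. y \<in> {0..L} \<Longrightarrow> \<phi> y \<le> \<phi> t"
    using continuous_attains_sup[of "{0..L}" \<phi>] period_pos by auto
  have max: "\<phi> y \<le> \<phi> t" for y
    using max_box[of "y rmod L"] period_pos rmod_less rmod_nonneg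
    by (simp add: \<phi>_def rmod_eqs less_imp_le)
  have "((c t - c a) \<bullet> c' t) = 0"
    using DERIV_local_max[OF has_real_derivative_norm_diff_power2[OF has_velocity] zero_less_one]
      max unfolding \<phi>_def by simp
  moreover have "3 / (8 * \<rho>) \<le> norm (c (a + 1 / (2 * \<rho>)) - c a)"
    using curvature_pos by (intro chord_norm_lower_bound) (simp_all add: field_simps)
  then have "0 < \<phi> (a + 1 / (2 * \<rho>))"
    using curvature_pos unfolding \<phi>_def
    by (smt (verit) divide_pos_pos zero_less_norm_iff zero_less_power)
  then have "c t \<noteq> c a"
    using max[of "a + 1 / (2 * \<rho>)"] by (auto simp: \<phi>_def)
  ultimately show ?thesis
    by (metis inner_diff_left inner_minus_left minus_diff_eq neg_equal_0_iff_equal)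
qed

end

section \<open>Two curves near a crossing\<close>

lemma norm_scaleR_diff_ge_sin:
  fixes T U :: "'a::real_inner"
  assumes "norm T = 1" "norm U = 1" "\<bar>T \<bullet> U\<bar> \<le> cos \<theta>" "0 \<le> sin \<theta>"
  shows "sin \<theta> * \<bar>u\<bar> \<le> norm (u *\<^sub>R T - v *\<^sub>R U)"
proof (rule power2_le_imp_le)
  have "(sin \<theta>)\<^sup>2 = 1 - (cos \<theta>)\<^sup>2"
    by (simp add: sin_squared_eq)
  also have "\<dots> \<le> 1 - (T \<bullet> U)\<^sup>2"
    using power_mono[OF assms(3) abs_ge_zero, of 2] by simp
  finally have "(sin \<theta> * \<bar>u\<bar>)\<^sup>2 \<le> u\<^sup>2 * (1 - (T \<bullet> U)\<^sup>2)"
    by (simp add: power_mult_distrib mult.commute mult_left_mono)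
  also have "\<dots> \<le> (v - u * (T \<bullet> U))\<^sup>2 + u\<^sup>2 * (1 - (T \<bullet> U)\<^sup>2)"
    by simp
  also have "\<dots> = (norm (u *\<^sub>R T - v *\<^sub>R U))\<^sup>2"
    using assms(1,2) norm_eq_1[of T] norm_eq_1[of U] unfolding power2_norm_eq_inner
    by (simp add: inner_diff_left inner_diff_right inner_commute[of U T] power2_eq_square
                  algebra_simps)
  finally show "(sin \<theta> * \<bar>u\<bar>)\<^sup>2 \<le> (norm (u *\<^sub>R T - v *\<^sub>R U))\<^sup>2" .
qed simp

lemma quadratic_less_imp_less:
  fixes S \<rho> M N :: real
  assumes "0 < \<rho>" "M < S / (2 * \<rho>)" "N < S / (2 * \<rho>)"
    and "S * M - \<rho> * M\<^sup>2 < S * N - \<rho> * N\<^sup>2"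
  shows "M < N"
proof (rule ccontr)
  assume "\<not> M < N"
  moreover have "\<rho> * (M + N) < S"
    using assms(1-3) by (simp add: field_simps)
  ultimately have "0 \<le> (M - N) * (S - \<rho> * (M + N))"
    by simp
  then show False
    using assms(4) by (simp add: power2_eq_square algebra_simps)
qed

lemma quadratic_at_twice_ratio:
  fixes S \<rho> r :: real
  assumes "0 < \<rho>" "0 < r" "0 \<le> S" "4 * \<rho> * r < S\<^sup>2"
  shows "0 < S" "r < S * (2 * r / S) - \<rho> * (2 * r / S)\<^sup>2" "2 * r / S < S / (2 * \<rho>)"
proof -
  have "0 < S\<^sup>2"
    using assms(1,2,4) by (smt (verit) mult_pos_pos)
  then show "0 < S"
    using assms(3) by simp
  then show "r < S * (2 * r / S) - \<rho> * (2 * r / S)\<^sup>2" "2 * r / S < S / (2 * \<rho>)"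
    using assms by (simp_all add: power2_eq_square field_simps)
qed

lemma local_min_dist_orthogonal:
  fixes X Y :: "real \<Rightarrow> 'a::real_inner"
  assumes "(X has_vector_derivative X') (at s)" "(Y has_vector_derivative Y') (at t)"
    and "0 < e" and min: "\<And>z. z \<in> ball (s, t) e \<Longrightarrow> norm (X s - Y t) \<le> norm (X (fst z) - Y (snd z))"
  shows "(X s - Y t) \<bullet> X' = 0" "(X s - Y t) \<bullet> Y' = 0"
proof -
  have min2: "(norm (X s - Y t))\<^sup>2 \<le> (norm (X u - Y v))\<^sup>2" if "dist (s, t) (u, v) < e" for u v
    using min[of "(u, v)"] that by (simp add: power_mono)
  have "2 * ((X s - Y t) \<bullet> X') = 0"
    using has_real_derivative_norm_diff_power2[OF assms(1), of "Y t"] assms(3)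
    by (rule DERIV_local_min) (use min2 in \<open>simp add: dist_Pair_Pair dist_real_def\<close>)
  then show "(X s - Y t) \<bullet> X' = 0"
    by simp
  have "2 * ((Y t - X s) \<bullet> Y') = 0"
    using has_real_derivative_norm_diff_power2[OF assms(2), of "X s"] assms(3)
    by (rule DERIV_local_min)
      (use min2 in \<open>simp add: dist_Pair_Pair dist_real_def norm_minus_commute\<close>)
  then show "(X s - Y t) \<bullet> Y' = 0"
    by (simp add: inner_diff_left)
qed

lemma crossing_lower_bound:
  assumes "bounded_curvature_loop X X' X'' L1 \<rho>" "bounded_curvature_loop Y Y' Y'' L2 \<rho>"
    and cross: "X s = Y t" and angle: "\<bar>X' s \<bullet> Y' t\<bar> \<le> cos \<theta>" and "0 \<le> sin \<theta>"
  shows "sin \<theta> * max \<bar>u - s\<bar> \<bar>v - t\<bar> - \<rho> * (max \<bar>u - s\<bar> \<bar>v - t\<bar>)\<^sup>2 \<le> norm (X u - Y v)"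
proof -
  interpret X: bounded_curvature_loop X X' X'' L1 \<rho> by fact
  interpret Y: bounded_curvature_loop Y Y' Y'' L2 \<rho> by fact
  define M where "M = max \<bar>u - s\<bar> \<bar>v - t\<bar>"
  define A where "A = (u - s) *\<^sub>R X' s - (v - t) *\<^sub>R Y' t"
  define E1 where "E1 = X (s + (u - s)) - X s - (u - s) *\<^sub>R X' s"
  define E2 where "E2 = Y (t + (v - t)) - Y t - (v - t) *\<^sub>R Y' t"
  have "sin \<theta> * \<bar>u - s\<bar> \<le> norm A"
    unfolding A_def using X.unit_speed Y.unit_speed angle assms(5) by (rule norm_scaleR_diff_ge_sin)
  moreover have "sin \<theta> * \<bar>v - t\<bar> \<le> norm A"
    unfolding A_def norm_minus_commute[of "(u - s) *\<^sub>R X' s"]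
    using Y.unit_speed X.unit_speed angle assms(5)
    by (intro norm_scaleR_diff_ge_sin) (simp_all add: inner_commute)
  ultimately have "sin \<theta> * M \<le> norm A"
    by (simp add: M_def max_def)
  moreover have "(u - s)\<^sup>2 \<le> M\<^sup>2" "(v - t)\<^sup>2 \<le> M\<^sup>2"
    using power_mono[of "\<bar>u - s\<bar>" M 2] power_mono[of "\<bar>v - t\<bar>" M 2] by (simp_all add: M_def)
  then have "\<rho> * (u - s)\<^sup>2 \<le> \<rho> * M\<^sup>2" "\<rho> * (v - t)\<^sup>2 \<le> \<rho> * M\<^sup>2"
    using X.curvature_pos by simp_all
  then have "norm E1 \<le> \<rho> * M\<^sup>2 / 2" "norm E2 \<le> \<rho> * M\<^sup>2 / 2"
    using X.taylor_remainder_bound[of s "u - s"] Y.taylor_remainder_bound[of t "v - t"]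
    unfolding E1_def E2_def by linarith+
  moreover have "X u - Y v = A + (E1 - E2)"
    using cross by (simp add: A_def E1_def E2_def algebra_simps)
  then have "norm A - norm E1 - norm E2 \<le> norm (X u - Y v)"
    using norm_diff_ineq[of A "E1 - E2"] norm_triangle_ineq4[of E1 E2] by simp
  ultimately show ?thesis
    unfolding M_def by linarith
qed

text \<open>At parameter distance \<open>sin \<theta> / (2 * \<rho>)\<close> the lower bound of
  \<open>crossing_lower_bound\<close> equals \<open>sin \<theta>\<^sup>2 / (4 * \<rho>)\<close>, so a connected set on which the chord
  stays shorter cannot reach that distance.\<close>

lemma crossing_component_bound:
  assumes X: "bounded_curvature_loop X X' X'' L1 \<rho>" and Y: "bounded_curvature_loop Y Y' Y'' L2 \<rho>"
    and cross: "X s = Y t" and angle: "\<bar>X' s \<bullet> Y' t\<bar> \<le> cos \<theta>" and "0 \<le> sin \<theta>"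
    and "connected C" "(s, t) \<in> C" "(u, v) \<in> C"
    and close: "\<And>z. z \<in> C \<Longrightarrow> norm (X (fst z) - Y (snd z)) < sin \<theta> ^ 2 / (4 * \<rho>)"
  shows "max \<bar>u - s\<bar> \<bar>v - t\<bar> < sin \<theta> / (2 * \<rho>)"
proof (rule ccontr)
  define g where "g z = max \<bar>fst z - s\<bar> \<bar>snd z - t\<bar>" for z :: "real \<times> real"
  assume "\<not> ?thesis"
  then have "sin \<theta> / (2 * \<rho>) \<le> g (u, v)"
    unfolding g_def fst_conv snd_conv by (rule leI)
  moreover have "g (s, t) \<le> sin \<theta> / (2 * \<rho>)"
    using assms(5) bounded_curvature_loop.curvature_pos[OF X] by (simp add: g_def)
  moreover have "connected (g ` C)"
    unfolding g_def using \<open>connected C\<close> by (intro connected_continuous_image continuous_intros)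
  ultimately have "sin \<theta> / (2 * \<rho>) \<in> g ` C"
    using imageI[OF assms(7), of g] imageI[OF assms(8), of g] unfolding connected_iff_interval
    by meson
  then obtain z where "z \<in> C" and gz: "g z = sin \<theta> / (2 * \<rho>)"
    by (metis imageE)
  have "sin \<theta> ^ 2 / (4 * \<rho>) = sin \<theta> * g z - \<rho> * (g z)\<^sup>2"
    using bounded_curvature_loop.curvature_pos[OF X] by (simp add: gz power2_eq_square field_simps)
  also have "\<dots> \<le> norm (X (fst z) - Y (snd z))"
    unfolding g_def by (rule crossing_lower_bound[OF X Y cross angle assms(5)])
  finally show False
    using close[OF \<open>z \<in> C\<close>] by simp
qed

lemma crossing_component_distance_bound:
  assumes X: "bounded_curvature_loop X X' X'' L1 \<rho>" and Y: "bounded_curvature_loop Y Y' Y'' L2 \<rho>"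
    and cross: "X s = Y t" and angle: "\<bar>X' s \<bullet> Y' t\<bar> \<le> cos \<theta>" and "0 \<le> sin \<theta>"
    and "connected C" "(s, t) \<in> C" "(u, v) \<in> C"
    and "\<And>z. z \<in> C \<Longrightarrow> norm (X (fst z) - Y (snd z)) < sin \<theta> ^ 2 / (4 * \<rho>)"
    and N: "norm (X u - Y v) < sin \<theta> * N - \<rho> * N\<^sup>2" "N < sin \<theta> / (2 * \<rho>)"
  shows "max \<bar>u - s\<bar> \<bar>v - t\<bar> < N"
proof (rule quadratic_less_imp_less[OF bounded_curvature_loop.curvature_pos[OF X] _ N(2)])
  show "max \<bar>u - s\<bar> \<bar>v - t\<bar> < sin \<theta> / (2 * \<rho>)"
    by (rule crossing_component_bound[OF assms(1-9)])
  show "sin \<theta> * max \<bar>u - s\<bar> \<bar>v - t\<bar> - \<rho> * (max \<bar>u - s\<bar> \<bar>v - t\<bar>)\<^sup>2 < sin \<theta> * N - \<rho> * N\<^sup>2"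
    using crossing_lower_bound[OF X Y cross angle assms(5), of u v] N(1) by linarith
qed

section \<open>Minima of doubly periodic functions on connected components\<close>

definition period_lattice :: "real \<Rightarrow> real \<Rightarrow> (real \<times> real) set" where
  "period_lattice L1 L2 = {(of_int k * L1, of_int l * L2) | k l. True}"

definition period_rep :: "real \<Rightarrow> real \<Rightarrow> real \<times> real \<Rightarrow> real \<times> real" where
  "period_rep L1 L2 z = (fst z rmod L1, snd z rmod L2)"

lemma uminus_in_period_lattice:
  assumes "v \<in> period_lattice L1 L2"
  shows "- v \<in> period_lattice L1 L2"
proof -
  obtain k l where "v = (of_int k * L1, of_int l * L2)"
    using assms by (auto simp: period_lattice_def)
  then have "- v = (of_int (- k) * L1, of_int (- l) * L2)"
    by simp
  then show ?thesis
    unfolding period_lattice_def by blast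
qed

lemma diff_period_rep_in_period_lattice:
  "0 < L1 \<Longrightarrow> 0 < L2 \<Longrightarrow> z - period_rep L1 L2 z \<in> period_lattice L1 L2"
  unfolding period_lattice_def period_rep_def
  by (intro CollectI exI[of _ "\<lfloor>fst z / L1\<rfloor>"] exI[of _ "\<lfloor>snd z / L2\<rfloor>"])
     (simp add: rmod_def prod_eq_iff mult.commute)

lemma period_rep_in_box: "0 < L1 \<Longrightarrow> 0 < L2 \<Longrightarrow> period_rep L1 L2 z \<in> {0..L1} \<times> {0..L2}"
  by (simp add: period_rep_def rmod_nonneg rmod_le)

lemma period_rep_in_periodic_set:
  assumes "0 < L1" "0 < L2" and "\<And>z v. z \<in> G \<Longrightarrow> v \<in> period_lattice L1 L2 \<Longrightarrow> z + v \<in> G"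
    and "z \<in> G"
  shows "period_rep L1 L2 z \<in> G"
  using assms(3)[OF \<open>z \<in> G\<close>
      uminus_in_period_lattice[OF diff_period_rep_in_period_lattice[OF assms(1,2), of z]]]
  by simp

lemma ball_translate_in_periodic_set:
  assumes G_periodic: "\<And>z v. z \<in> G \<Longrightarrow> v \<in> period_lattice L1 L2 \<Longrightarrow> z + v \<in> G"
    and "ball z e \<subseteq> G" "v \<in> period_lattice L1 L2"
  shows "ball (z + v) e \<subseteq> G"
proof
  fix x assume "x \<in> ball (z + v) e"
  then have "x - v \<in> G"
    using assms(2) dist_add_cancel2[of z v "x - v"] by auto
  then show "x \<in> G"
    using G_periodic[OF _ assms(3)] by fastforce
qed

context
  fixes L1 L2 :: real and F :: "real \<times> real \<Rightarrow> real"
  assumes periods_pos: "0 < L1" "0 < L2"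
    and F_periodic: "\<And>z v. v \<in> period_lattice L1 L2 \<Longrightarrow> F (z + v) = F z"
begin

lemma periodic_period_rep: "F (period_rep L1 L2 z) = F z"
  using F_periodic[OF diff_period_rep_in_period_lattice[OF periods_pos], of "period_rep L1 L2 z" z]
  by simp

lemma periodic_attains_inf:
  assumes "continuous_on UNIV F" "A \<noteq> {}"
  obtains zs where "zs \<in> closure (period_rep L1 L2 ` A)" "\<And>y. y \<in> A \<Longrightarrow> F zs \<le> F y"
proof -
  have "period_rep L1 L2 ` A \<subseteq> {0..L1} \<times> {0..L2}"
    using period_rep_in_box[OF periods_pos] by blast
  then have "compact (closure (period_rep L1 L2 ` A))"
    unfolding compact_closure
    by (rule bounded_subset[OF bounded_Times[OF bounded_closed_interval bounded_closed_interval]])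
  moreover have "closure (period_rep L1 L2 ` A) \<noteq> {}"
    using \<open>A \<noteq> {}\<close> by simp
  ultimately obtain zs where zs: "zs \<in> closure (period_rep L1 L2 ` A)"
    and zs_min: "\<forall>y\<in>closure (period_rep L1 L2 ` A). F zs \<le> F y"
    using continuous_attains_inf continuous_on_subset[OF assms(1) subset_UNIV] by metis
  have "F zs \<le> F y" if "y \<in> A" for y
  proof -
    have "period_rep L1 L2 y \<in> closure (period_rep L1 L2 ` A)"
      by (rule subsetD[OF closure_subset imageI[OF that]])
    then have "F zs \<le> F (period_rep L1 L2 y)"
      using zs_min by blast
    then show ?thesis
      by (simp only: periodic_period_rep)
  qed
  with zs that show thesis
    by blast
qed

text \<open>The minimiser over the compact set of representatives is translated back next to a point
  of the component; a ball around it inside \<open>G\<close> then lies in the component.\<close>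

lemma periodic_min_on_component:
  assumes "continuous_on UNIV F"
    and G_periodic: "\<And>z v. z \<in> G \<Longrightarrow> v \<in> period_lattice L1 L2 \<Longrightarrow> z + v \<in> G"
    and "closed G" "z0 \<in> G" "F z0 < R"
    and G_open: "\<And>z. z \<in> G \<Longrightarrow> F z < R \<Longrightarrow> \<exists>e>0. ball z e \<subseteq> G"
  obtains z e where "0 < e" "ball z e \<subseteq> connected_component_set G z0"
    "\<forall>y\<in>ball z e. F z \<le> F y" "F z \<le> F z0"
proof -
  define C where "C = connected_component_set G z0"
  note rep_lattice = diff_period_rep_in_period_lattice[OF periods_pos]
  have "period_rep L1 L2 ` C \<subseteq> G"
  proof (rule image_subsetI)
    fix c assume "c \<in> C"
    then have "c \<in> G"
      using connected_component_subset unfolding C_def by blast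
    then show "period_rep L1 L2 c \<in> G"
      using period_rep_in_periodic_set[of L1 L2 G c] periods_pos G_periodic by blast
  qed
  have "z0 \<in> C"
    using \<open>z0 \<in> G\<close> by (simp add: C_def)
  then have "C \<noteq> {}"
    by blast
  then obtain zs where zs: "zs \<in> closure (period_rep L1 L2 ` C)"
    and zs_min: "\<And>y. y \<in> C \<Longrightarrow> F zs \<le> F y"
    using periodic_attains_inf[OF assms(1)] by blast
  have "F zs \<le> F z0"
    using zs_min[OF \<open>z0 \<in> C\<close>] .
  moreover have "zs \<in> G"
    using closure_minimal[OF \<open>period_rep L1 L2 ` C \<subseteq> G\<close> \<open>closed G\<close>] zs ..
  ultimately obtain e where "0 < e" and ball_zs: "ball zs e \<subseteq> G"
    using G_open \<open>F z0 < R\<close> by (meson le_less_trans)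
  then obtain c where "c \<in> C" and "dist (period_rep L1 L2 c) zs < e"
    using zs unfolding closure_approachable by blast
  define v where "v = c - period_rep L1 L2 c"
  have "ball (zs + v) e \<subseteq> G"
    unfolding v_def using G_periodic ball_zs rep_lattice by (rule ball_translate_in_periodic_set)
  moreover have "c \<in> ball (zs + v) e"
    using \<open>dist (period_rep L1 L2 c) zs < e\<close> dist_add_cancel2[of zs v "period_rep L1 L2 c"]
    by (simp add: v_def dist_commute)
  ultimately have "ball (zs + v) e \<subseteq> connected_component_set G c"
    by (intro connected_component_maximal connected_ball)
  also have "\<dots> = C"
    using \<open>c \<in> C\<close> unfolding C_def by (rule connected_component_eq)
  finally have "ball (zs + v) e \<subseteq> C" .
  moreover have "F (zs + v) = F zs"
    using F_periodic[OF rep_lattice[of c]] by (simp add: v_def)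
  ultimately show thesis
    using that[of e "zs + v"] \<open>0 < e\<close> \<open>F zs \<le> F z0\<close> zs_min unfolding C_def by (metis subsetD)
qed

end

section \<open>The immersed curve system\<close>

lemma curve_system_unit_speed_loop:
  assumes "curve_system I L \<gamma> \<gamma>' \<gamma>''" "i \<in> I"
  shows "unit_speed_loop (\<gamma> i) (\<gamma>' i) (\<gamma>'' i) (L i)"
  using assms unfolding curve_system_def by unfold_locales auto

lemma rmod_in_pts: "i \<in> I \<Longrightarrow> 0 < L i \<Longrightarrow> (i, t rmod L i) \<in> pts I L"
  by (simp add: pts_def rmod_nonneg rmod_less)

lemma curve_system_bounded_curvature_loop:
  assumes curves: "curve_system I L \<gamma> \<gamma>' \<gamma>''" and "0 < \<rho>"
    and sff: "\<forall>p\<in>pts I L. sff_norm \<gamma>' \<gamma>'' p \<le> \<rho>" and "i \<in> I"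
  shows "bounded_curvature_loop (\<gamma> i) (\<gamma>' i) (\<gamma>'' i) (L i) \<rho>"
proof -
  interpret unit_speed_loop "\<gamma> i" "\<gamma>' i" "\<gamma>'' i" "L i"
    using curves \<open>i \<in> I\<close> by (rule curve_system_unit_speed_loop)
  have "norm (\<gamma>'' i t) \<le> \<rho>" for t
  proof -
    have "sff_norm \<gamma>' \<gamma>'' (i, t rmod L i) \<le> \<rho>"
      using sff rmod_in_pts[of i I L t, OF \<open>i \<in> I\<close> period_pos] by blast
    \<comment> \<open>at unit speed the acceleration is normal, so \<open>sff_norm\<close> is its norm\<close>
    then show ?thesis
      by (simp add: sff_norm_def upt_def rmod_eqs acceleration_orthogonal)
  qed
  then show ?thesis
    using \<open>0 < \<rho>\<close> by unfold_locales
qed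

lemma
  assumes "curve_system I L \<gamma> \<gamma>' \<gamma>''" "i \<in> I"
  shows upt_rmod: "upt \<gamma> (i, t rmod L i) = \<gamma> i t"
    and upt_velocity_rmod: "upt \<gamma>' (i, t rmod L i) = \<gamma>' i t"
  using unit_speed_loop.rmod_eqs[OF curve_system_unit_speed_loop[OF assms]]
  by (simp_all add: upt_def)

lemma curve_system_in_pts_unit_tangent:
  "curve_system I L \<gamma> \<gamma>' \<gamma>'' \<Longrightarrow> p \<in> pts I L \<Longrightarrow> norm (upt \<gamma>' p) = 1"
  by (auto simp: pts_def curve_system_def upt_def)

lemma orthogonal_tline_iff: "(\<forall>v\<in>tline \<gamma>' q. w \<bullet> v = 0) \<longleftrightarrow> w \<bullet> upt \<gamma>' q = 0"
  by (auto simp: tline_def upt_def span_singleton)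

lemma
  assumes "curve_system I L \<gamma> \<gamma>' \<gamma>''"
  shows sin_Theta_nonneg: "0 \<le> sin (Theta I L \<gamma> \<gamma>')"
    and Theta_le_cos: "(p, q) \<in> C0set I L \<gamma> \<Longrightarrow> \<bar>upt \<gamma>' p \<bullet> upt \<gamma>' q\<bar> \<le> cos (Theta I L \<gamma> \<gamma>')"
proof -
  define A where "A = insert (pi / 2) ((\<lambda>(p, q). line_angle \<gamma>' p q) ` C0set I L \<gamma>)"
  have Theta_eq: "Theta I L \<gamma> \<gamma>' = Inf A"
    by (simp add: Theta_def A_def)
  have inner_le_1: "\<bar>upt \<gamma>' p \<bullet> upt \<gamma>' q\<bar> \<le> 1" if "(p, q) \<in> C0set I L \<gamma>" for p q
    using that Cauchy_Schwarz_ineq2[of "upt \<gamma>' p" "upt \<gamma>' q"]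
      curve_system_in_pts_unit_tangent[OF assms] by (auto simp: C0set_def)
  have A_nonneg: "0 \<le> x" if "x \<in> A" for x
    using that inner_le_1
    by (auto simp: A_def line_angle_def arccos_lbound) (use pi_gt_zero in linarith)
  then have "bdd_below A"
    by (rule bdd_belowI)
  have "0 \<le> Theta I L \<gamma> \<gamma>'"
    unfolding Theta_eq using A_nonneg by (intro cInf_greatest) (auto simp: A_def)
  moreover have "Theta I L \<gamma> \<gamma>' \<le> pi / 2"
    unfolding Theta_eq using \<open>bdd_below A\<close> by (intro cInf_lower) (simp add: A_def)
  ultimately show "0 \<le> sin (Theta I L \<gamma> \<gamma>')"
    by (intro sin_ge_zero) simp_all
  assume C0: "(p, q) \<in> C0set I L \<gamma>"
  then have "Theta I L \<gamma> \<gamma>' \<le> line_angle \<gamma>' p q"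
    unfolding Theta_eq using \<open>bdd_below A\<close> by (intro cInf_lower) (force simp: A_def)
  then have "cos (line_angle \<gamma>' p q) \<le> cos (Theta I L \<gamma> \<gamma>')"
    using \<open>0 \<le> Theta I L \<gamma> \<gamma>'\<close> inner_le_1[OF C0]
    by (intro cos_monotone_0_pi_le) (simp_all add: line_angle_def arccos_ubound)
  then show "\<bar>upt \<gamma>' p \<bullet> upt \<gamma>' q\<bar> \<le> cos (Theta I L \<gamma> \<gamma>')"
    using inner_le_1[OF C0] by (simp add: line_angle_def cos_arccos)
qed

lemma Delta_le_norm:
  "(p, q) \<in> D0set I L \<gamma> \<gamma>' - C0set I L \<gamma> \<Longrightarrow> Delta I L \<gamma> \<gamma>' \<le> ereal (norm (upt \<gamma> p - upt \<gamma> q))"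
  unfolding Delta_def by (rule INF_lower2) auto

lemma gdist_rmod_le:
  assumes "0 < L i"
  shows "gdist L (i, a) (i, s rmod L i) \<le> ereal \<bar>a - s\<bar>"
proof -
  have shift: "a - s rmod L i + of_int (- \<lfloor>s / L i\<rfloor>) * L i = a - s"
    using assms by (simp add: rmod_def algebra_simps)
  have "\<bar>a - s\<bar> \<in> {\<bar>a - s rmod L i + of_int k * L i\<bar> | k. True}"
    by (intro CollectI exI[of _ "- \<lfloor>s / L i\<rfloor>"]) (subst shift, simp)
  then show ?thesis
    unfolding gdist_def by (auto intro!: cInf_lower bdd_belowI[of _ 0])
qed

section \<open>Normal reach\<close>

definition normal_dists ::
  "'i set \<Rightarrow> ('i \<Rightarrow> real) \<Rightarrow> ('i \<Rightarrow> real \<Rightarrow> 'a::euclidean_space) \<Rightarrow> ('i \<Rightarrow> real \<Rightarrow> 'a)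
   \<Rightarrow> 'i \<times> real \<Rightarrow> real set" where
  "normal_dists I L \<gamma> \<gamma>' p = {norm (upt \<gamma> p - upt \<gamma> q) | q.
      q \<in> pts I L \<and> q \<noteq> p \<and> (upt \<gamma> p - upt \<gamma> q) \<bullet> upt \<gamma>' q = 0}"

lemma normal_reach_eq_Inf: "normal_reach I L \<gamma> \<gamma>' p = Inf (normal_dists I L \<gamma> \<gamma>' p)"
  by (simp add: normal_reach_def normal_dists_def orthogonal_tline_iff)

lemma normal_dists_nonneg: "x \<in> normal_dists I L \<gamma> \<gamma>' p \<Longrightarrow> 0 \<le> x"
  by (auto simp: normal_dists_def)

lemma normal_reach_le:
  assumes "q \<in> pts I L" "q \<noteq> p" "(upt \<gamma> p - upt \<gamma> q) \<bullet> upt \<gamma>' q = 0"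
  shows "normal_reach I L \<gamma> \<gamma>' p \<le> norm (upt \<gamma> p - upt \<gamma> q)"
  unfolding normal_reach_eq_Inf
proof (rule cInf_lower)
  show "norm (upt \<gamma> p - upt \<gamma> q) \<in> normal_dists I L \<gamma> \<gamma>' p"
    using assms unfolding normal_dists_def by blast
qed (meson bdd_belowI normal_dists_nonneg)

lemma C0set_normal_reach_eq_0:
  assumes "(p, q) \<in> C0set I L \<gamma>"
  shows "normal_reach I L \<gamma> \<gamma>' p = 0"
  unfolding normal_reach_eq_Inf
proof (rule cInf_eq_minimum)
  show "0 \<in> normal_dists I L \<gamma> \<gamma>' p"
    using assms unfolding normal_dists_def C0set_def by (intro CollectI exI[of _ q]) auto
qed (rule normal_dists_nonneg)

lemma exists_normal_foot:
  assumes curves: "curve_system I L \<gamma> \<gamma>' \<gamma>''" and "0 < \<rho>"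
    and sff: "\<forall>p\<in>pts I L. sff_norm \<gamma>' \<gamma>'' p \<le> \<rho>" and "p \<in> pts I L"
  shows "\<exists>q. q \<in> pts I L \<and> q \<noteq> p \<and> (upt \<gamma> p - upt \<gamma> q) \<bullet> upt \<gamma>' q = 0"
proof -
  obtain i a where p: "p = (i, a)" "i \<in> I" "0 \<le> a" "a < L i"
    using \<open>p \<in> pts I L\<close> by (auto simp: pts_def)
  interpret bounded_curvature_loop "\<gamma> i" "\<gamma>' i" "\<gamma>'' i" "L i" \<rho>
    using curve_system_bounded_curvature_loop[OF curves \<open>0 < \<rho>\<close> sff \<open>i \<in> I\<close>] .
  obtain t where "(\<gamma> i a - \<gamma> i t) \<bullet> \<gamma>' i t = 0" "\<gamma> i t \<noteq> \<gamma> i a"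
    using exists_normal_chord by blast
  moreover have "t rmod L i \<noteq> a"
    using \<open>\<gamma> i t \<noteq> \<gamma> i a\<close> rmod_eqs(1)[of t] by metis
  ultimately show ?thesis
    using rmod_in_pts[of i I L t, OF \<open>i \<in> I\<close> period_pos]
    by (intro exI[of _ "(i, t rmod L i)"]) (simp add: p upt_def rmod_eqs)
qed

context
  fixes I :: "'i set" and L and \<gamma> \<gamma>' :: "'i \<Rightarrow> real \<Rightarrow> 'a::euclidean_space" and p
  assumes foot: "\<exists>q. q \<in> pts I L \<and> q \<noteq> p \<and> (upt \<gamma> p - upt \<gamma> q) \<bullet> upt \<gamma>' q = 0"
begin

lemma normal_dists_nonempty: "normal_dists I L \<gamma> \<gamma>' p \<noteq> {}"
  using foot unfolding normal_dists_def by blast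

lemma normal_reach_nonneg: "0 \<le> normal_reach I L \<gamma> \<gamma>' p"
  unfolding normal_reach_eq_Inf using normal_dists_nonempty normal_dists_nonneg
  by (rule cInf_greatest)

lemma normal_reach_lessE:
  assumes "ereal (normal_reach I L \<gamma> \<gamma>' p) < r"
  obtains q where "q \<in> pts I L" "q \<noteq> p" "(upt \<gamma> p - upt \<gamma> q) \<bullet> upt \<gamma>' q = 0"
    "ereal (norm (upt \<gamma> p - upt \<gamma> q)) < r"
proof -
  obtain d where "normal_reach I L \<gamma> \<gamma>' p < d" "ereal d < r"
    using ereal_dense2[OF assms] by auto
  then obtain x where "x \<in> normal_dists I L \<gamma> \<gamma>' p" "x < d"
    using cInf_lessD[OF normal_dists_nonempty] unfolding normal_reach_eq_Inf by blast
  then obtain q where q: "q \<in> pts I L" "q \<noteq> p" "(upt \<gamma> p - upt \<gamma> q) \<bullet> upt \<gamma>' q = 0"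
    and "x = norm (upt \<gamma> p - upt \<gamma> q)"
    unfolding normal_dists_def by blast
  have "ereal (norm (upt \<gamma> p - upt \<gamma> q)) < ereal d"
    using \<open>x < d\<close> \<open>x = norm (upt \<gamma> p - upt \<gamma> q)\<close> by simp
  then have "ereal (norm (upt \<gamma> p - upt \<gamma> q)) < r"
    using \<open>ereal d < r\<close> by (rule less_trans)
  then show thesis
    by (rule that[OF q])
qed

end

section \<open>Chord regions in the parameter plane\<close>

text \<open>For \<open>i = j\<close> the band of width \<open>\<delta>\<close> around the diagonal (modulo the period) removes the
  trivial zeros \<open>s \<equiv> t\<close> of the chord length.\<close>

definition chord_region ::
  "('i \<Rightarrow> real \<Rightarrow> 'a::real_normed_vector) \<Rightarrow> ('i \<Rightarrow> real) \<Rightarrow> 'i \<Rightarrow> 'i \<Rightarrow> real \<Rightarrow> real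
   \<Rightarrow> (real \<times> real) set" where
  "chord_region \<gamma> L i j R \<delta> = {z. norm (\<gamma> i (fst z) - \<gamma> j (snd z)) \<le> R
      \<and> (i = j \<longrightarrow> (\<forall>k::int. \<delta> \<le> \<bar>fst z - snd z - of_int k * L i\<bar>))}"

lemma continuous_on_chord:
  assumes "continuous_on UNIV (\<gamma> i)" "continuous_on UNIV (\<gamma> j)"
  shows "continuous_on UNIV (\<lambda>z::real \<times> real. norm (\<gamma> i (fst z) - \<gamma> j (snd z)))"
  using continuous_on_compose2[OF assms(1) continuous_on_fst[OF continuous_on_id]]
    continuous_on_compose2[OF assms(2) continuous_on_snd[OF continuous_on_id]]
  by (intro continuous_intros) auto

lemma closed_chord_region:
  assumes "continuous_on UNIV (\<gamma> i)" "continuous_on UNIV (\<gamma> j)"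
  shows "closed (chord_region \<gamma> L i j R \<delta>)"
  unfolding chord_region_def using continuous_on_chord[OF assms]
  by (intro closed_Collect_conj closed_Collect_imp open_Collect_const closed_Collect_all
      closed_Collect_le[OF continuous_on_chord[OF assms]] closed_Collect_le continuous_intros)

lemma chord_region_periodic:
  assumes "\<And>t. \<gamma> i (t + L i) = \<gamma> i t" "\<And>t. \<gamma> j (t + L j) = \<gamma> j t"
    and "z \<in> chord_region \<gamma> L i j R \<delta>" "v \<in> period_lattice (L i) (L j)"
  shows "z + v \<in> chord_region \<gamma> L i j R \<delta>"
proof -
  obtain k l where v: "v = (of_int k * L i, of_int l * L j)"
    using assms(4) by (auto simp: period_lattice_def)
  have "\<delta> \<le> \<bar>fst (z + v) - snd (z + v) - of_int m * L i\<bar>" if "i = j" for m :: int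
  proof -
    have "\<forall>n::int. \<delta> \<le> \<bar>fst z - snd z - of_int n * L i\<bar>"
      using assms(3) that by (simp add: chord_region_def)
    then have "\<delta> \<le> \<bar>fst z - snd z - of_int (m - k + l) * L i\<bar>"
      by (rule spec)
    also have "\<dots> = \<bar>fst (z + v) - snd (z + v) - of_int m * L i\<bar>"
      using that by (simp add: v algebra_simps)
    finally show ?thesis .
  qed
  then show ?thesis
    using assms(3) periodic_add_of_int_mult[of "\<gamma> i", OF assms(1)]
      periodic_add_of_int_mult[of "\<gamma> j", OF assms(2)]
    by (simp add: chord_region_def v)
qed

lemma (in bounded_curvature_loop) short_chord_off_diagonal_gap:
  assumes "norm (c s - c t) < 3 / (8 * \<rho>)" "1 / (2 * \<rho>) \<le> \<bar>s - t - of_int k * L\<bar>"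
  shows "1 / \<rho> < \<bar>s - t - of_int k * L\<bar>"
proof (rule ccontr)
  define h where "h = s - t - of_int k * L"
  assume "\<not> ?thesis"
  then have "3 / (8 * \<rho>) \<le> norm (c ((t + of_int k * L) + h) - c (t + of_int k * L))"
    using assms(2) by (intro chord_norm_lower_bound) (auto simp: h_def)
  also have "\<dots> = norm (c s - c t)"
    by (simp add: h_def periodic_of_int)
  finally show False
    using assms(1) by simp
qed

lemma chord_region_open:
  assumes "bounded_curvature_loop (\<gamma> i) (\<gamma>' i) (\<gamma>'' i) (L i) \<rho>"
    and "bounded_curvature_loop (\<gamma> j) (\<gamma>' j) (\<gamma>'' j) (L j) \<rho>"
    and z: "z \<in> chord_region \<gamma> L i j R (1 / (2 * \<rho>))" and "norm (\<gamma> i (fst z) - \<gamma> j (snd z)) < R"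
    and "R < 3 / (8 * \<rho>)"
  shows "\<exists>e>0. ball z e \<subseteq> chord_region \<gamma> L i j R (1 / (2 * \<rho>))"
proof -
  interpret i: bounded_curvature_loop "\<gamma> i" "\<gamma>' i" "\<gamma>'' i" "L i" \<rho> by fact
  interpret j: bounded_curvature_loop "\<gamma> j" "\<gamma>' j" "\<gamma>'' j" "L j" \<rho> by fact
  define \<delta> where "\<delta> = 1 / (2 * \<rho>)"
  have "open {y. norm (\<gamma> i (fst y) - \<gamma> j (snd y)) < R}"
    by (rule open_Collect_less[OF continuous_on_chord[OF i.continuous j.continuous]
          continuous_on_const])
  then obtain e where "0 < e" and e: "ball z e \<subseteq> {y. norm (\<gamma> i (fst y) - \<gamma> j (snd y)) < R}"
    using assms(4) open_contains_ball by blast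
  \<comment> \<open>short chords on one loop have parameter gap outside \<open>[\<delta>, 2 * \<delta>]\<close>\<close>
  have "\<delta> \<le> \<bar>fst y - snd y - of_int k * L i\<bar>" if "i = j" "dist z y < \<delta> / 2" for y k
  proof -
    have "2 * \<delta> < \<bar>fst z - snd z - of_int k * L i\<bar>"
      using z assms(4,5) that(1) i.short_chord_off_diagonal_gap[of "fst z" "snd z" k]
      by (simp add: chord_region_def \<delta>_def)
    moreover have "\<bar>fst y - fst z\<bar> \<le> dist z y" "\<bar>snd y - snd z\<bar> \<le> dist z y"
      using dist_fst_le[of z y] dist_snd_le[of z y]
      by (simp_all add: dist_real_def abs_minus_commute)
    ultimately show ?thesis
      using that(2) by linarith
  qed
  then have "ball z (min e (\<delta> / 2)) \<subseteq> chord_region \<gamma> L i j R (1 / (2 * \<rho>))"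
    using e by (force simp: chord_region_def \<delta>_def)
  moreover have "0 < min e (\<delta> / 2)"
    using \<open>0 < e\<close> i.curvature_pos by (simp add: \<delta>_def)
  ultimately show ?thesis
    by blast
qed

lemma normal_chord_in_chord_region:
  assumes "bounded_curvature_loop (\<gamma> j) (\<gamma>' j) (\<gamma>'' j) (L j) \<rho>"
    and perp: "(\<gamma> i a - \<gamma> j b) \<bullet> \<gamma>' j b = 0"
    and "0 < norm (\<gamma> i a - \<gamma> j b)" "norm (\<gamma> i a - \<gamma> j b) \<le> R"
  shows "(a, b) \<in> chord_region \<gamma> L i j R (1 / (2 * \<rho>))"
proof -
  interpret j: bounded_curvature_loop "\<gamma> j" "\<gamma>' j" "\<gamma>'' j" "L j" \<rho> by fact
  have "1 / (2 * \<rho>) \<le> \<bar>a - b - of_int k * L j\<bar>" if "i = j" for k :: int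
  proof (rule ccontr)
    define h where "h = a - b - of_int k * L j"
    assume "\<not> ?thesis"
    then have "\<bar>h\<bar> < 2 / \<rho>"
      using j.curvature_pos by (simp add: h_def field_simps)
    moreover have "\<gamma> i a = \<gamma> j (b + h)"
      using j.periodic_of_int[of "b + h" k] that by (simp add: h_def)
    moreover from this have "h \<noteq> 0"
      using assms(3) by auto
    ultimately show False
      using j.no_short_normal_chord[of h b] perp by simp
  qed
  then show ?thesis
    using assms(4) by (simp add: chord_region_def)
qed

lemma chord_region_rmod_neq:
  assumes "z \<in> chord_region \<gamma> L i j R \<delta>" "0 < \<delta>"
  shows "(i, fst z rmod L i) \<noteq> (j, snd z rmod L j)"
proof
  assume eq: "(i, fst z rmod L i) = (j, snd z rmod L j)"
  then obtain k :: int where "fst z - snd z = of_int k * L i"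
    using rmod_eq_rmod_imp_int_mult by (metis prod.inject)
  moreover have "\<delta> \<le> \<bar>fst z - snd z - of_int k * L i\<bar>"
    using assms(1) eq by (simp add: chord_region_def)
  ultimately show False
    using assms(2) by simp
qed

section \<open>Crossings near short normal chords\<close>

lemma exists_critical_chord_in_component:
  assumes loop_i: "bounded_curvature_loop (\<gamma> i) (\<gamma>' i) (\<gamma>'' i) (L i) \<rho>"
    and loop_j: "bounded_curvature_loop (\<gamma> j) (\<gamma>' j) (\<gamma>'' j) (L j) \<rho>"
    and perp: "(\<gamma> i a - \<gamma> j b) \<bullet> \<gamma>' j b = 0" and "0 < norm (\<gamma> i a - \<gamma> j b)"
    and "norm (\<gamma> i a - \<gamma> j b) < R" and "R < 3 / (8 * \<rho>)"
  obtains s t where "(s, t) \<in> connected_component_set (chord_region \<gamma> L i j R (1 / (2 * \<rho>))) (a, b)"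
    "norm (\<gamma> i s - \<gamma> j t) \<le> norm (\<gamma> i a - \<gamma> j b)"
    "(\<gamma> i s - \<gamma> j t) \<bullet> \<gamma>' i s = 0" "(\<gamma> i s - \<gamma> j t) \<bullet> \<gamma>' j t = 0"
proof -
  interpret i: bounded_curvature_loop "\<gamma> i" "\<gamma>' i" "\<gamma>'' i" "L i" \<rho> by (fact loop_i)
  interpret j: bounded_curvature_loop "\<gamma> j" "\<gamma>' j" "\<gamma>'' j" "L j" \<rho> by (fact loop_j)
  define G where "G = chord_region \<gamma> L i j R (1 / (2 * \<rho>))"
  define F where "F z = norm (\<gamma> i (fst z) - \<gamma> j (snd z))" for z
  have "(a, b) \<in> G"
    unfolding G_def using perp assms(4,5)
    by (intro normal_chord_in_chord_region[where \<gamma>=\<gamma> and \<gamma>'=\<gamma>' and \<gamma>''=\<gamma>'' and L=L and j=j,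
          OF loop_j])
      simp_all
  obtain z e where "0 < e" and ball: "ball z e \<subseteq> connected_component_set G (a, b)"
    and min: "\<forall>y\<in>ball z e. F z \<le> F y" and "F z \<le> F (a, b)"
  proof (rule periodic_min_on_component[of "L i" "L j" F G "(a, b)" R])
    show "continuous_on UNIV F"
      unfolding F_def
      by (rule continuous_on_chord[where \<gamma>=\<gamma> and i=i and j=j, OF i.continuous j.continuous])
    show "F (y + v) = F y" if "v \<in> period_lattice (L i) (L j)" for y v
      using that by (auto simp: period_lattice_def F_def i.periodic_of_int j.periodic_of_int)
    show "y + v \<in> G" if "y \<in> G" "v \<in> period_lattice (L i) (L j)" for y v
      using that unfolding G_def
      by (rule chord_region_periodic[where \<gamma>=\<gamma> and L=L and i=i and j=j, OF i.periodic j.periodic])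
    show "closed G"
      unfolding G_def
      by (rule closed_chord_region[where \<gamma>=\<gamma> and i=i and j=j, OF i.continuous j.continuous])
    show "\<exists>e>0. ball y e \<subseteq> G" if "y \<in> G" "F y < R" for y
      using that assms(6) unfolding G_def F_def
      by (rule chord_region_open[where \<gamma>=\<gamma> and \<gamma>'=\<gamma>' and \<gamma>''=\<gamma>'' and L=L and i=i and j=j,
            OF loop_i loop_j])
  qed (use i.period_pos j.period_pos \<open>(a, b) \<in> G\<close> assms(5) in \<open>simp_all add: F_def\<close>)
  obtain s t where z: "z = (s, t)"
    by fastforce
  have "(s, t) \<in> connected_component_set G (a, b)"
    using ball \<open>0 < e\<close> unfolding z by (meson centre_in_ball subsetD)
  moreover have "(\<gamma> i s - \<gamma> j t) \<bullet> \<gamma>' i s = 0" "(\<gamma> i s - \<gamma> j t) \<bullet> \<gamma>' j t = 0"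
    using local_min_dist_orthogonal[OF i.has_velocity j.has_velocity \<open>0 < e\<close>] min
    by (auto simp: z F_def)
  ultimately show thesis
    using that \<open>F z \<le> F (a, b)\<close> unfolding G_def by (simp add: z F_def)
qed

text \<open>A critical chord shorter than \<open>\<Delta>\<close> must be degenerate: a self-crossing.\<close>

lemma chord_component_contains_crossing:
  assumes curves: "curve_system I L \<gamma> \<gamma>' \<gamma>''" and "0 < \<rho>"
    and sff: "\<forall>p\<in>pts I L. sff_norm \<gamma>' \<gamma>'' p \<le> \<rho>" and "i \<in> I" "j \<in> I"
    and perp: "(\<gamma> i a - \<gamma> j b) \<bullet> \<gamma>' j b = 0" and "0 < norm (\<gamma> i a - \<gamma> j b)"
    and "norm (\<gamma> i a - \<gamma> j b) < R" and "ereal R < Delta I L \<gamma> \<gamma>'" and "R < 3 / (8 * \<rho>)"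
  obtains s t where "(s, t) \<in> connected_component_set (chord_region \<gamma> L i j R (1 / (2 * \<rho>))) (a, b)"
    "((i, s rmod L i), (j, t rmod L j)) \<in> C0set I L \<gamma>"
proof -
  have loop_i: "bounded_curvature_loop (\<gamma> i) (\<gamma>' i) (\<gamma>'' i) (L i) \<rho>"
    and loop_j: "bounded_curvature_loop (\<gamma> j) (\<gamma>' j) (\<gamma>'' j) (L j) \<rho>"
    using curve_system_bounded_curvature_loop[OF curves \<open>0 < \<rho>\<close> sff] assms(4,5) by blast+
  note upt_eqs = upt_rmod[OF curves \<open>i \<in> I\<close>] upt_rmod[OF curves \<open>j \<in> I\<close>]
    upt_velocity_rmod[OF curves \<open>i \<in> I\<close>] upt_velocity_rmod[OF curves \<open>j \<in> I\<close>]
  have in_pts: "(i, s rmod L i) \<in> pts I L" "(j, t rmod L j) \<in> pts I L" for s t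
    using rmod_in_pts[of i I L s] rmod_in_pts[of j I L t] assms(4,5)
      unit_speed_loop.period_pos[OF curve_system_unit_speed_loop[OF curves]] by simp_all
  obtain s t
    where C: "(s, t) \<in> connected_component_set (chord_region \<gamma> L i j R (1 / (2 * \<rho>))) (a, b)"
    and shorter: "norm (\<gamma> i s - \<gamma> j t) \<le> norm (\<gamma> i a - \<gamma> j b)"
    and critical: "(\<gamma> i s - \<gamma> j t) \<bullet> \<gamma>' i s = 0" "(\<gamma> i s - \<gamma> j t) \<bullet> \<gamma>' j t = 0"
    using exists_critical_chord_in_component[OF loop_i loop_j perp assms(7,8,10)] by blast
  have cross: "\<gamma> i s = \<gamma> j t"
  proof (rule ccontr)
    assume "\<gamma> i s \<noteq> \<gamma> j t"
    have "(i, s rmod L i) \<noteq> (j, t rmod L j)"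
    proof
      assume "(i, s rmod L i) = (j, t rmod L j)"
      then have "upt \<gamma> (i, s rmod L i) = upt \<gamma> (j, t rmod L j)"
        by (rule arg_cong)
      then show False
        using \<open>\<gamma> i s \<noteq> \<gamma> j t\<close> by (simp add: upt_eqs)
    qed
    then have "((i, s rmod L i), (j, t rmod L j)) \<in> D0set I L \<gamma> \<gamma>' - C0set I L \<gamma>"
      using \<open>\<gamma> i s \<noteq> \<gamma> j t\<close> in_pts critical
      by (simp add: D0set_def C0set_def orthogonal_tline_iff upt_eqs)
    from Delta_le_norm[OF this] have "Delta I L \<gamma> \<gamma>' \<le> ereal (norm (\<gamma> i s - \<gamma> j t))"
      by (simp add: upt_eqs)
    also have "\<dots> < ereal R"
      using shorter assms(8) by simp
    finally show False
      using assms(9) by simp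
  qed
  have "(s, t) \<in> chord_region \<gamma> L i j R (1 / (2 * \<rho>))"
    using C connected_component_subset by blast
  from chord_region_rmod_neq[OF this] have "((i, s rmod L i), (j, t rmod L j)) \<in> C0set I L \<gamma>"
    using cross \<open>0 < \<rho>\<close> in_pts by (simp add: C0set_def upt_eqs)
  with C show thesis
    using that by blast
qed

lemma exists_crossing_near_normal_chord:
  assumes curves: "curve_system I L \<gamma> \<gamma>' \<gamma>''" and "0 < \<rho>"
    and sff: "\<forall>p\<in>pts I L. sff_norm \<gamma>' \<gamma>'' p \<le> \<rho>" and "i \<in> I" "j \<in> I"
    and perp: "(\<gamma> i a - \<gamma> j b) \<bullet> \<gamma>' j b = 0" and "0 < norm (\<gamma> i a - \<gamma> j b)"
    and "ereal (norm (\<gamma> i a - \<gamma> j b)) < Delta I L \<gamma> \<gamma>'"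
    and "norm (\<gamma> i a - \<gamma> j b) < sin (Theta I L \<gamma> \<gamma>') ^ 2 / (4 * \<rho>)"
    and N: "norm (\<gamma> i a - \<gamma> j b) < sin (Theta I L \<gamma> \<gamma>') * N - \<rho> * N\<^sup>2"
      "N < sin (Theta I L \<gamma> \<gamma>') / (2 * \<rho>)"
  obtains s t where "((i, s rmod L i), (j, t rmod L j)) \<in> C0set I L \<gamma>" "\<bar>a - s\<bar> < N"
proof -
  define S where "S = sin (Theta I L \<gamma> \<gamma>')"
  have loop_i: "bounded_curvature_loop (\<gamma> i) (\<gamma>' i) (\<gamma>'' i) (L i) \<rho>"
    and loop_j: "bounded_curvature_loop (\<gamma> j) (\<gamma>' j) (\<gamma>'' j) (L j) \<rho>"
    using curve_system_bounded_curvature_loop[OF curves \<open>0 < \<rho>\<close> sff] assms(4,5) by blast+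
  \<comment> \<open>a level strictly between the chord length and both \<open>\<Delta>\<close> and \<open>S\<^sup>2 / (4 * \<rho>)\<close>\<close>
  obtain D where "norm (\<gamma> i a - \<gamma> j b) < D" "ereal D < Delta I L \<gamma> \<gamma>'"
    using ereal_dense2[OF assms(8)] by auto
  define R where "R = (norm (\<gamma> i a - \<gamma> j b) + min D (S\<^sup>2 / (4 * \<rho>))) / 2"
  have "norm (\<gamma> i a - \<gamma> j b) < R" and R_small: "R < S\<^sup>2 / (4 * \<rho>)"
    using \<open>norm (\<gamma> i a - \<gamma> j b) < D\<close> assms(9) by (simp_all add: R_def S_def)
  have "ereal R < ereal D"
    using \<open>norm (\<gamma> i a - \<gamma> j b) < D\<close> by (simp add: R_def)
  then have "ereal R < Delta I L \<gamma> \<gamma>'"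
    using \<open>ereal D < Delta I L \<gamma> \<gamma>'\<close> by (rule less_trans)
  have "S\<^sup>2 \<le> 1"
    unfolding S_def by (simp add: abs_square_le_1)
  then have "R < 3 / (8 * \<rho>)"
    using R_small \<open>0 < \<rho>\<close> by (simp add: field_simps)
  define C where "C = connected_component_set (chord_region \<gamma> L i j R (1 / (2 * \<rho>))) (a, b)"
  obtain s t where "(s, t) \<in> C" and C0: "((i, s rmod L i), (j, t rmod L j)) \<in> C0set I L \<gamma>"
    using chord_component_contains_crossing[OF curves \<open>0 < \<rho>\<close> sff assms(4-7)
        \<open>norm (\<gamma> i a - \<gamma> j b) < R\<close> \<open>ereal R < Delta I L \<gamma> \<gamma>'\<close> \<open>R < 3 / (8 * \<rho>)\<close>]
    unfolding C_def by blast
  note upt_eqs = upt_rmod[OF curves \<open>i \<in> I\<close>] upt_rmod[OF curves \<open>j \<in> I\<close>]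
    upt_velocity_rmod[OF curves \<open>i \<in> I\<close>] upt_velocity_rmod[OF curves \<open>j \<in> I\<close>]
  have cross: "\<gamma> i s = \<gamma> j t"
    using C0 by (simp add: C0set_def upt_eqs)
  have angle: "\<bar>\<gamma>' i s \<bullet> \<gamma>' j t\<bar> \<le> cos (Theta I L \<gamma> \<gamma>')"
    using Theta_le_cos[OF curves C0] by (simp add: upt_eqs)
  have "(a, b) \<in> chord_region \<gamma> L i j R (1 / (2 * \<rho>))"
    using perp assms(7) \<open>norm (\<gamma> i a - \<gamma> j b) < R\<close>
    by (intro normal_chord_in_chord_region[where \<gamma>=\<gamma> and \<gamma>'=\<gamma>' and \<gamma>''=\<gamma>'' and L=L and j=j,
          OF loop_j])
      simp_all
  then have "(a, b) \<in> C"
    by (simp add: C_def)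
  have close: "norm (\<gamma> i (fst z) - \<gamma> j (snd z)) < S ^ 2 / (4 * \<rho>)" if "z \<in> C" for z
    using that connected_component_subset R_small unfolding C_def chord_region_def by fastforce
  have "max \<bar>a - s\<bar> \<bar>b - t\<bar> < N"
    using crossing_component_distance_bound[OF loop_i loop_j cross angle sin_Theta_nonneg[OF curves]
        _ \<open>(s, t) \<in> C\<close> \<open>(a, b) \<in> C\<close> close[unfolded S_def] N]
    by (simp add: C_def)
  then show thesis
    using that[OF C0] by simp
qed

lemma exists_zero_normal_reach_nearby:
  assumes curves: "curve_system I L \<gamma> \<gamma>' \<gamma>''" and "0 < \<rho>"
    and sff: "\<forall>p\<in>pts I L. sff_norm \<gamma>' \<gamma>'' p \<le> \<rho>" and "(i, a) \<in> pts I L"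
    and pos: "0 < normal_reach I L \<gamma> \<gamma>' (i, a)"
    and small: "ereal (normal_reach I L \<gamma> \<gamma>' (i, a))
                  < min (Delta I L \<gamma> \<gamma>') (ereal (sin (Theta I L \<gamma> \<gamma>') ^ 2 / (4 * \<rho>)))"
  obtains xs where "xs \<in> pts I L" "normal_reach I L \<gamma> \<gamma>' xs = 0"
    "gdist L (i, a) xs \<le> ereal (2 / sin (Theta I L \<gamma> \<gamma>') * normal_reach I L \<gamma> \<gamma>' (i, a))"
proof -
  define r0 where "r0 = normal_reach I L \<gamma> \<gamma>' (i, a)"
  define S where "S = sin (Theta I L \<gamma> \<gamma>')"
  define N where "N = 2 * r0 / S"
  have "4 * \<rho> * r0 < S\<^sup>2"
    using small \<open>0 < \<rho>\<close> by (simp add: r0_def S_def field_simps)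
  then have "0 < S" "r0 < S * N - \<rho> * N\<^sup>2" "N < S / (2 * \<rho>)"
    using quadratic_at_twice_ratio[OF \<open>0 < \<rho>\<close> pos[folded r0_def]] sin_Theta_nonneg[OF curves]
    unfolding N_def S_def by blast+
  then have "ereal r0 < min (Delta I L \<gamma> \<gamma>') (ereal (min (S\<^sup>2 / (4 * \<rho>)) (S * N - \<rho> * N\<^sup>2)))"
    using small by (simp add: r0_def S_def)
  then obtain q where "q \<in> pts I L" "q \<noteq> (i, a)"
    and perp: "(upt \<gamma> (i, a) - upt \<gamma> q) \<bullet> upt \<gamma>' q = 0"
    and q_short: "ereal (norm (upt \<gamma> (i, a) - upt \<gamma> q))
       < min (Delta I L \<gamma> \<gamma>') (ereal (min (S\<^sup>2 / (4 * \<rho>)) (S * N - \<rho> * N\<^sup>2)))"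
    using normal_reach_lessE[OF exists_normal_foot[OF curves \<open>0 < \<rho>\<close> sff \<open>(i, a) \<in> pts I L\<close>]]
    unfolding r0_def by blast
  obtain j b where q: "q = (j, b)" "j \<in> I"
    using \<open>q \<in> pts I L\<close> by (auto simp: pts_def)
  have "i \<in> I"
    using \<open>(i, a) \<in> pts I L\<close> by (simp add: pts_def)
  have "r0 \<le> norm (\<gamma> i a - \<gamma> j b)"
    using normal_reach_le[OF \<open>q \<in> pts I L\<close> \<open>q \<noteq> (i, a)\<close> perp] by (simp add: r0_def q upt_def)
  then have "0 < norm (\<gamma> i a - \<gamma> j b)"
    using pos unfolding r0_def by linarith
  moreover have "(\<gamma> i a - \<gamma> j b) \<bullet> \<gamma>' j b = 0"
    using perp by (simp add: q upt_def)
  moreover have "ereal (norm (\<gamma> i a - \<gamma> j b)) < Delta I L \<gamma> \<gamma>'"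
    and "norm (\<gamma> i a - \<gamma> j b) < S\<^sup>2 / (4 * \<rho>)" "norm (\<gamma> i a - \<gamma> j b) < S * N - \<rho> * N\<^sup>2"
    using q_short by (simp_all add: q upt_def)
  ultimately obtain s t
    where C0: "((i, s rmod L i), (j, t rmod L j)) \<in> C0set I L \<gamma>" and "\<bar>a - s\<bar> < N"
    using exists_crossing_near_normal_chord[OF curves \<open>0 < \<rho>\<close> sff \<open>i \<in> I\<close> \<open>j \<in> I\<close>]
      \<open>N < S / (2 * \<rho>)\<close> unfolding S_def by blast
  have "gdist L (i, a) (i, s rmod L i) \<le> ereal \<bar>a - s\<bar>"
    using \<open>(i, a) \<in> pts I L\<close> by (intro gdist_rmod_le) (simp add: pts_def)
  also have "\<dots> \<le> ereal (2 / S * r0)"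
    using \<open>\<bar>a - s\<bar> < N\<close> by (simp add: N_def)
  finally show thesis
    using that[of "(i, s rmod L i)"] C0set_normal_reach_eq_0[OF C0] C0
    unfolding S_def r0_def C0set_def by blast
qed

theorem lemma2p15:
  fixes I :: "'i set" and L :: "'i \<Rightarrow> real"
    and \<gamma> \<gamma>' \<gamma>'' :: "'i \<Rightarrow> real \<Rightarrow> 'a::euclidean_space"
    and \<rho> fmin fmax :: real and f :: "'i \<times> real \<Rightarrow> real" and x0 :: "'i \<times> real"
  assumes curves: "curve_system I L \<gamma> \<gamma>' \<gamma>''"
    and transversal: "\<forall>(p,q)\<in>C0set I L \<gamma>. tline \<gamma>' p \<noteq> tline \<gamma>' q"
    and rho_pos: "\<rho> > 0"
    and sff: "\<forall>p\<in>pts I L. sff_norm \<gamma>' \<gamma>'' p \<le> \<rho>"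
    and dens_int: "\<forall>i\<in>I. (\<lambda>s. f (i,s)) integrable_on {0..L i}"
    and dens_prob: "(\<Sum>i\<in>I. integral {0..L i} (\<lambda>s. f (i,s))) = 1"
    and dens_lip: "\<exists>K. \<forall>p\<in>pts I L. \<forall>q\<in>pts I L. \<forall>d. gdist L p q = ereal d \<longrightarrow> \<bar>f p - f q\<bar> \<le> K * d"
    and dens_bounds: "0 < fmin" "fmin \<le> fmax" "\<forall>p\<in>pts I L. fmin \<le> f p \<and> f p \<le> fmax"
    and x0: "x0 \<in> pts I L"
    and small: "ereal (normal_reach I L \<gamma> \<gamma>' x0)
                  < min (Delta I L \<gamma> \<gamma>') (ereal (sin (Theta I L \<gamma> \<gamma>') ^ 2 / (4 * \<rho>)))"
  shows "\<exists>xs\<in>pts I L. normal_reach I L \<gamma> \<gamma>' xs = 0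
           \<and> gdist L x0 xs \<le> ereal (2 / sin (Theta I L \<gamma> \<gamma>') * normal_reach I L \<gamma> \<gamma>' x0)"
proof -
  obtain i a where x0_eq: "x0 = (i, a)" and "0 \<le> a" "a < L i"
    using \<open>x0 \<in> pts I L\<close> by (auto simp: pts_def)
  have "0 \<le> normal_reach I L \<gamma> \<gamma>' x0"
    by (rule normal_reach_nonneg[OF exists_normal_foot[OF curves rho_pos sff x0]])
  show ?thesis
  proof (cases "normal_reach I L \<gamma> \<gamma>' x0 = 0")
    case True
    have "gdist L x0 x0 \<le> ereal 0"
      using gdist_rmod_le[of L i a a] \<open>0 \<le> a\<close> \<open>a < L i\<close> by (simp add: x0_eq rmod_idem)
    then show ?thesis
      using True \<open>x0 \<in> pts I L\<close> by auto
  next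
    case False
    then have "0 < normal_reach I L \<gamma> \<gamma>' (i, a)"
      using \<open>0 \<le> normal_reach I L \<gamma> \<gamma>' x0\<close> by (simp add: x0_eq)
    from exists_zero_normal_reach_nearby[OF curves rho_pos sff x0[unfolded x0_eq] this
        small[unfolded x0_eq]]
    show ?thesis
      unfolding x0_eq by blast
  qed
qed

end
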